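(* Let $s>1$ be constant and $G\sim G_{n,p}$ with $p=\frac{\log n+\omega(n)}{n}$, $\omega(n)\to\infty$, $np=O(\log n)$. For the Death-Birth process on $G$ started from a single mutant, w.h.p. $N(X)\cap S_0$ does not increase during the first $\omega_0^{3/4}$ iterations.
   Context: Death-Birth process: $X\subseteq[n]$ is the mutant set (fitness $s$, others fitness 1); at each step a uniformly random vertex $v$ is chosen, then a neighbor $u$ of $v$ is chosen with probability proportional to its fitness, and $v$ takes the type of $u$. An iteration is a step in which $X$ changes. $N(X)=\{w\notin X:\exists v\in X, vw\in E(G)\}$. $\varepsilon=1/\log\log\log n$, $S_0=\{v:d(v)\le np/10\}$, $\omega_0=\frac{\varepsilon^2 np}{100\log(np)}$. *)

theory Defs
  imports "HOL-Probability.Probability" "HOL-Library.Landau_Symbols"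
begin

text \<open>Graphs on the vertex set [n] = {0..<n}; a graph is given by its set of edges,
each edge being a 2-element subset of {0..<n}.\<close>

definition vpairs :: "nat \<Rightarrow> nat set set" where
  "vpairs n = {e. \<exists>u v. u < n \<and> v < n \<and> u \<noteq> v \<and> e = {u, v}}"

definition gnp :: "nat \<Rightarrow> real \<Rightarrow> nat set set pmf" where
  "gnp n p = map_pmf (\<lambda>f. {e \<in> vpairs n. f e}) (Pi_pmf (vpairs n) False (\<lambda>_. bernoulli_pmf p))"

definition nbrs :: "nat set set \<Rightarrow> nat \<Rightarrow> nat set" where
  "nbrs E v = {u. {u, v} \<in> E \<and> u \<noteq> v}"

definition deg :: "nat set set \<Rightarrow> nat \<Rightarrow> nat" where
  "deg E v = card (nbrs E v)"

definition nbhd :: "nat set set \<Rightarrow> nat set \<Rightarrow> nat set" where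
  "nbhd E X = {w. w \<notin> X \<and> (\<exists>v\<in>X. {v, w} \<in> E \<and> v \<noteq> w)}"

definition S0 :: "nat set set \<Rightarrow> nat \<Rightarrow> real \<Rightarrow> nat set" where
  "S0 E n p = {v. v < n \<and> real (deg E v) \<le> real n * p / 10}"

definition eps :: "nat \<Rightarrow> real" where
  "eps n = 1 / ln (ln (ln (real n)))"

definition omega0 :: "nat \<Rightarrow> real \<Rightarrow> real" where
  "omega0 n p = (eps n)^2 * real n * p / (100 * ln (real n * p))"

text \<open>One step of the Death-Birth process with mutant fitness s on the graph E with
vertex set {0..<n}: a uniformly random vertex v dies; a neighbour u of v is chosen with
probability proportional to its fitness (s for mutants, 1 otherwise) and v takes the type of u.
Since the outcome only depends on whether u is a mutant, this is a Bernoulli choice with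
success probability s*m/(s*m+r), m resp. r = number of mutant resp. non-mutant neighbours.
(If v has no neighbours nothing happens.)\<close>
definition db_step :: "nat set set \<Rightarrow> nat \<Rightarrow> real \<Rightarrow> nat set \<Rightarrow> nat set pmf" where
  "db_step E n s X = do {
     v \<leftarrow> pmf_of_set {0..<n};
     (if nbrs E v = {} then return_pmf X else
       (let m = real (card (nbrs E v \<inter> X)); r = real (card (nbrs E v - X)) in
        map_pmf (\<lambda>b. if b then insert v X else X - {v})
                (bernoulli_pmf (s * m / (s * m + r)))))
   }"

text \<open>One iteration = one step in which X changes: the jump chain of the process
(the step conditioned on X changing; if X cannot change, it stays put).\<close>
definition db_iter :: "nat set set \<Rightarrow> nat \<Rightarrow> real \<Rightarrow> nat set \<Rightarrow> nat set pmf" where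
  "db_iter E n s X =
     (if measure_pmf.prob (db_step E n s X) {Y. Y \<noteq> X} = 0 then return_pmf X
      else cond_pmf (db_step E n s X) {Y. Y \<noteq> X})"

fun db_path :: "nat set set \<Rightarrow> nat \<Rightarrow> real \<Rightarrow> nat set \<Rightarrow> nat \<Rightarrow> nat set list pmf" where
  "db_path E n s X0 0 = return_pmf [X0]"
| "db_path E n s X0 (Suc m) =
     bind_pmf (db_path E n s X0 m) (\<lambda>xs. map_pmf (\<lambda>Y. xs @ [Y]) (db_iter E n s (last xs)))"

definition db_experiment :: "nat \<Rightarrow> real \<Rightarrow> real \<Rightarrow> nat \<Rightarrow> (nat set set \<times> nat set list) pmf" where
  "db_experiment n p s m = do {
     E \<leftarrow> gnp n p;
     v \<leftarrow> pmf_of_set {0..<n};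
     xs \<leftarrow> db_path E n s {v} m;
     return_pmf (E, xs)
   }"

definition no_increase :: "nat \<Rightarrow> real \<Rightarrow> nat \<Rightarrow> nat set set \<times> nat set list \<Rightarrow> bool" where
  "no_increase n p m = (\<lambda>(E, xs). \<forall>i < m.
      card (nbhd E (xs ! Suc i) \<inter> S0 E n p) \<le> card (nbhd E (xs ! i) \<inter> S0 E n p))"

end

(* Each iteration changes the mutant set X by a single vertex, and a vertex can only become
   a mutant if it has a mutant neighbour; hence after i iterations X lies in the ball of radius i
   around the initial mutant v, and N(X) \<inter> S_0 can only grow if S_0 meets the ball of radius
   m + 1 around v (m = \<lfloor>\<omega>_0^(3/4)\<rfloor>). By symmetry of
   distances, at most |S_0| (\<Delta> + 1)^(m+1) vertices v have this property. Degrees in G(n,p)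
   are Bin(n - 1, p), so Chernoff bounds give \<Delta> \<le> 2np + 2 log n except with probability
   1/n and E|S_0| = O(n^(3/5)), while (\<Delta> + 1)^(m+1) = exp(O((log n)^(3/4) log log n)). *)

theory Submission
  imports Defs "HOL-Real_Asymp.Real_Asymp"
begin

lemma nbrs_sym: "u \<in> nbrs E v \<longleftrightarrow> v \<in> nbrs E u"
  unfolding nbrs_def by (auto simp: insert_commute)

definition closed_nbhd :: "nat set set \<Rightarrow> nat set \<Rightarrow> nat set" where
  "closed_nbhd E X = X \<union> \<Union>(nbrs E ` X)"

fun ball :: "nat set set \<Rightarrow> nat \<Rightarrow> nat \<Rightarrow> nat set" where
  "ball E v 0 = {v}"
| "ball E v (Suc k) = closed_nbhd E (ball E v k)"

lemma ball_mono: "k \<le> l \<Longrightarrow> ball E v k \<subseteq> ball E v l"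
proof (induction l)
  case (Suc l)
  then show ?case by (cases "k = Suc l") (auto simp: closed_nbhd_def)
qed simp

lemma ball_subset_ball_Suc_nbr: "u \<in> nbrs E x \<Longrightarrow> ball E u k \<subseteq> ball E x (Suc k)"
  by (induction k) (auto simp: closed_nbhd_def simp del: ball.simps(2)
      simp add: ball.simps(2)[of E u] ball.simps(2)[of E x])

lemma ball_sym: "x \<in> ball E v k \<Longrightarrow> v \<in> ball E x k"
proof (induction k arbitrary: x)
  case (Suc k)
  show ?case
  proof (cases "x \<in> ball E v k")
    case True
    then show ?thesis using Suc.IH ball_mono[of k "Suc k" E x] by auto
  next
    case False
    then obtain u where "u \<in> ball E v k" "x \<in> nbrs E u"
      using Suc.prems by (auto simp: closed_nbhd_def)
    then show ?thesis using Suc.IH ball_subset_ball_Suc_nbr nbrs_sym by blast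
  qed
qed simp

lemma card_ball_le:
  assumes "\<And>x. finite (nbrs E x)" and "\<And>x. card (nbrs E x) \<le> D"
  shows "finite (ball E v k) \<and> card (ball E v k) \<le> (D + 1) ^ k"
proof (induction k)
  case (Suc k)
  have "card (\<Union>(nbrs E ` ball E v k)) \<le> (\<Sum>x\<in>ball E v k. card (nbrs E x))"
    using Suc by (intro card_UN_le) auto
  also have "\<dots> \<le> card (ball E v k) * D"
    using sum_mono[of "ball E v k" "\<lambda>x. card (nbrs E x)" "\<lambda>_. D"] assms by simp
  finally have "card (ball E v (Suc k)) \<le> card (ball E v k) * (D + 1)"
    using card_Un_le[of "ball E v k" "\<Union>(nbrs E ` ball E v k)"] by (simp add: closed_nbhd_def)
  also have "\<dots> \<le> (D + 1) ^ k * (D + 1)"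
    using Suc by (intro mult_right_mono) auto
  finally show ?case using Suc assms by (simp add: closed_nbhd_def mult.commute)
qed simp

lemma card_near_set_le:
  assumes "\<And>x. finite (nbrs E x)" and "\<And>x. card (nbrs E x) \<le> D" and "finite S"
  shows "card {v\<in>V. S \<inter> ball E v k \<noteq> {}} \<le> card S * (D + 1) ^ k"
proof -
  have "{v\<in>V. S \<inter> ball E v k \<noteq> {}} \<subseteq> (\<Union>w\<in>S. ball E w k)"
    using ball_sym by blast
  then have "card {v\<in>V. S \<inter> ball E v k \<noteq> {}} \<le> card (\<Union>w\<in>S. ball E w k)"
    using card_ball_le[OF assms(1,2)] assms(3) by (intro card_mono) auto
  also have "\<dots> \<le> (\<Sum>w\<in>S. card (ball E w k))"
    using assms(3) by (rule card_UN_le)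
  also have "\<dots> \<le> card S * (D + 1) ^ k"
    using sum_mono[of S "\<lambda>w. card (ball E w k)" "\<lambda>_. (D + 1) ^ k"] card_ball_le[OF assms(1,2)]
    by simp
  finally show ?thesis .
qed

lemma set_pmf_db_step_subset:
  assumes "Y \<in> set_pmf (db_step E n s X)"
  shows "Y \<subseteq> closed_nbhd E X"
proof -
  from assms obtain v where v: "Y \<in> set_pmf (if nbrs E v = {} then return_pmf X else
       (let m = real (card (nbrs E v \<inter> X)); r = real (card (nbrs E v - X)) in
        map_pmf (\<lambda>b. if b then insert v X else X - {v})
                (bernoulli_pmf (s * m / (s * m + r)))))"
    unfolding db_step_def by auto
  show ?thesis
  proof (cases "nbrs E v = {}")
    case False
    with v have "Y \<in> (\<lambda>b. if b then insert v X else X - {v}) ` set_pmf (bernoulli_pmf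
        (s * real (card (nbrs E v \<inter> X)) / (s * real (card (nbrs E v \<inter> X)) + real (card (nbrs E v - X)))))"
      by (simp add: Let_def)
    then obtain b where b: "b \<in> set_pmf (bernoulli_pmf (s * real (card (nbrs E v \<inter> X)) /
        (s * real (card (nbrs E v \<inter> X)) + real (card (nbrs E v - X)))))"
      and Y: "Y = (if b then insert v X else X - {v})"
      by (rule imageE)
    show ?thesis
    proof (cases b)
      case True
      have "card (nbrs E v \<inter> X) \<noteq> 0"
      proof
        assume "card (nbrs E v \<inter> X) = 0"
        then show False using b True by (simp add: set_pmf_iff)
      qed
      then obtain u where "u \<in> nbrs E v" "u \<in> X" by (metis card.empty disjoint_iff)
      then show ?thesis using Y True nbrs_sym by (auto simp: closed_nbhd_def)
    qed (use Y in \<open>auto simp: closed_nbhd_def\<close>)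
  qed (use v in \<open>auto simp: closed_nbhd_def\<close>)
qed

lemma set_pmf_db_iter_subset:
  assumes "Y \<in> set_pmf (db_iter E n s X)"
  shows "Y \<subseteq> closed_nbhd E X"
proof (cases "measure_pmf.prob (db_step E n s X) {Y. Y \<noteq> X} = 0")
  case True
  then show ?thesis using assms unfolding db_iter_def by (auto simp: closed_nbhd_def)
next
  case False
  then have ne: "set_pmf (db_step E n s X) \<inter> {Y. Y \<noteq> X} \<noteq> {}"
    by (simp add: measure_pmf_zero_iff)
  have "Y \<in> set_pmf (cond_pmf (db_step E n s X) {Y. Y \<noteq> X})"
    using assms False unfolding db_iter_def by simp
  then have "Y \<in> set_pmf (db_step E n s X)" using set_cond_pmf[OF ne] by blast
  then show ?thesis by (rule set_pmf_db_step_subset)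
qed

lemma set_pmf_db_path:
  assumes "xs \<in> set_pmf (db_path E n s X0 m)"
  shows "length xs = Suc m \<and> xs ! 0 = X0 \<and> (\<forall>i<m. xs ! Suc i \<subseteq> closed_nbhd E (xs ! i))"
  using assms
proof (induction m arbitrary: xs)
  case (Suc m)
  from Suc.prems obtain ys Y where ys: "ys \<in> set_pmf (db_path E n s X0 m)"
    and Y: "Y \<in> set_pmf (db_iter E n s (last ys))" and xs: "xs = ys @ [Y]" by auto
  from Suc.IH[OF ys] have IH: "length ys = Suc m" "ys ! 0 = X0"
    "\<forall>i<m. ys ! Suc i \<subseteq> closed_nbhd E (ys ! i)" by auto
  have "last ys = ys ! m" using IH by (cases ys rule: rev_cases) auto
  then have "xs ! Suc i \<subseteq> closed_nbhd E (xs ! i)" if "i < Suc m" for i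
    using that xs IH set_pmf_db_iter_subset[OF Y] by (cases "i = m") (simp_all add: nth_append)
  then show ?case using xs IH by (simp add: nth_append)
qed simp

lemma set_pmf_db_path_subset_ball:
  assumes "xs \<in> set_pmf (db_path E n s {v} m)" and "i \<le> m"
  shows "xs ! i \<subseteq> ball E v i"
  using assms(2)
proof (induction i)
  case (Suc i)
  then have "xs ! Suc i \<subseteq> closed_nbhd E (xs ! i)" using set_pmf_db_path[OF assms(1)] by simp
  also have "\<dots> \<subseteq> closed_nbhd E (ball E v i)" using Suc by (auto simp: closed_nbhd_def)
  finally show ?case by simp
qed (use set_pmf_db_path[OF assms(1)] in simp)

lemma S0_meets_ball_if_not_no_increase:
  assumes "xs \<in> set_pmf (db_path E n s {v} m)" and "\<not> no_increase n p m (E, xs)"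
  shows "S0 E n p \<inter> ball E v (Suc m) \<noteq> {}"
proof -
  from assms(2) obtain i where i: "i < m"
    and "card (nbhd E (xs ! Suc i) \<inter> S0 E n p) > card (nbhd E (xs ! i) \<inter> S0 E n p)"
    unfolding no_increase_def by auto
  then obtain w where w: "w \<in> nbhd E (xs ! Suc i)" "w \<in> S0 E n p"
    by (metis card.empty disjoint_iff not_less0)
  then obtain y where y: "y \<in> xs ! Suc i" "w \<in> nbrs E y"
    unfolding nbhd_def nbrs_def by (auto simp: insert_commute)
  have "y \<in> ball E v (Suc i)" using set_pmf_db_path_subset_ball[OF assms(1), of "Suc i"] i y by auto
  then have "w \<in> ball E v (Suc (Suc i))" using y by (auto simp: closed_nbhd_def)
  then have "w \<in> ball E v (Suc m)" using ball_mono[of "Suc (Suc i)" "Suc m" E v] i by auto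
  then show ?thesis using w by auto
qed

lemma measure_bind_pmf:
  "measure_pmf.prob (bind_pmf M f) A = measure_pmf.expectation M (\<lambda>x. measure_pmf.prob (f x) A)"
  using measurable_measure_pmf[of f] unfolding measure_pmf_bind
  by (subst measure_pmf.measure_bind[where N="count_space UNIV"]) auto

lemma map_pmf_db_path_hd: "map_pmf (\<lambda>xs. xs ! 0) (db_path E n s X0 m) = return_pmf X0"
proof -
  have "map_pmf (\<lambda>xs. xs ! 0) (db_path E n s X0 m) = map_pmf (\<lambda>_. X0) (db_path E n s X0 m)"
    using set_pmf_db_path by (intro map_pmf_cong) auto
  then show ?thesis by simp
qed

lemma map_pmf_db_experiment_initial:
  "map_pmf (\<lambda>(E, xs). (E, xs ! 0)) (db_experiment n p s m) =
   bind_pmf (gnp n p) (\<lambda>E. map_pmf (\<lambda>v. (E, {v})) (pmf_of_set {0..<n}))"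
proof -
  have inner: "map_pmf (\<lambda>(E, xs). (E, xs ! 0)) (db_path E n s {v} m \<bind> (\<lambda>xs. return_pmf (E, xs)))
      = return_pmf (E, {v})" for E v
  proof -
    have "map_pmf (\<lambda>(E, xs). (E, xs ! 0)) (db_path E n s {v} m \<bind> (\<lambda>xs. return_pmf (E, xs)))
       = map_pmf (\<lambda>X. (E, X)) (map_pmf (\<lambda>xs. xs ! 0) (db_path E n s {v} m))"
      by (simp add: map_bind_pmf map_pmf_def bind_assoc_pmf bind_return_pmf)
    then show ?thesis by (simp add: map_pmf_db_path_hd)
  qed
  show ?thesis
    unfolding db_experiment_def map_bind_pmf[of _ "gnp n p"] map_bind_pmf[of _ "pmf_of_set _"] inner
    by (simp add: map_pmf_def)
qed

lemma prob_no_increase_ge: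
  assumes "n > 0"
  shows "measure_pmf.prob (db_experiment n p s m) {r. no_increase n p m r} \<ge>
    1 - measure_pmf.expectation (gnp n p)
      (\<lambda>E. real (card {v\<in>{0..<n}. S0 E n p \<inter> ball E v (Suc m) \<noteq> {}}) / real n)"
proof -
  let ?M = "db_experiment n p s m"
  let ?init = "\<lambda>(E::nat set set, xs::nat set list). (E, xs ! 0)"
  define Near where "Near = {(E, X). \<exists>v. X = {v} \<and> S0 E n p \<inter> ball E v (Suc m) \<noteq> {}}"
  have "measure_pmf.prob ?M {r. \<not> no_increase n p m r} \<le> measure_pmf.prob ?M (?init -` Near)"
  proof (rule measure_pmf.finite_measure_mono_AE)
    show "AE r in measure_pmf ?M. r \<in> {r. \<not> no_increase n p m r} \<longrightarrow> r \<in> ?init -` Near"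
    proof (rule AE_pmfI)
      fix r assume r: "r \<in> set_pmf ?M"
      obtain E xs where r_eq: "r = (E, xs)" by (cases r)
      from r obtain v where xs: "xs \<in> set_pmf (db_path E n s {v} m)"
        unfolding db_experiment_def r_eq by auto
      show "r \<in> {r. \<not> no_increase n p m r} \<longrightarrow> r \<in> ?init -` Near"
        using S0_meets_ball_if_not_no_increase[OF xs] set_pmf_db_path[OF xs]
        unfolding r_eq Near_def by auto
    qed
  qed auto
  also have "\<dots> = measure_pmf.prob (map_pmf ?init ?M) Near"
    by simp
  also have "\<dots> = measure_pmf.expectation (gnp n p)
      (\<lambda>E. real (card {v\<in>{0..<n}. S0 E n p \<inter> ball E v (Suc m) \<noteq> {}}) / real n)"
    unfolding map_pmf_db_experiment_initial measure_bind_pmf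
  proof (intro Bochner_Integration.integral_cong refl)
    fix E
    have "measure_pmf.prob (map_pmf (\<lambda>v. (E, {v})) (pmf_of_set {0..<n})) Near
        = measure_pmf.prob (pmf_of_set {0..<n}) {v. S0 E n p \<inter> ball E v (Suc m) \<noteq> {}}"
      by (simp add: Near_def vimage_def)
    also have "\<dots> = real (card {v\<in>{0..<n}. S0 E n p \<inter> ball E v (Suc m) \<noteq> {}}) / real n"
      using assms by (subst measure_pmf_of_set) (auto simp: Int_def)
    finally show "measure_pmf.prob (map_pmf (\<lambda>v. (E, {v})) (pmf_of_set {0..<n})) Near = \<dots>" .
  qed
  finally show ?thesis
    using measure_pmf.prob_compl[of "{r. no_increase n p m r}" ?M]
    by (simp add: Compl_eq Diff_eq)
qed

lemma pair_in_vpairs: "{u, v} \<in> vpairs n \<longleftrightarrow> u < n \<and> v < n \<and> u \<noteq> v"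
  unfolding vpairs_def by (auto simp: doubleton_eq_iff)

lemma finite_vpairs: "finite (vpairs n)"
proof -
  have "vpairs n \<subseteq> Pow {0..<n}" unfolding vpairs_def by auto
  then show ?thesis by (rule finite_subset) simp
qed

lemma set_pmf_gnp_subset: "E \<in> set_pmf (gnp n p) \<Longrightarrow> E \<subseteq> vpairs n"
  unfolding gnp_def by auto

lemma finite_set_pmf_gnp: "finite (set_pmf (gnp n p))"
proof -
  have "set_pmf (gnp n p) \<subseteq> Pow (vpairs n)" using set_pmf_gnp_subset by auto
  then show ?thesis using finite_vpairs by (meson finite_Pow_iff finite_subset)
qed

lemma nbrs_subset_vertices: "E \<subseteq> vpairs n \<Longrightarrow> nbrs E x \<subseteq> {0..<n}"
  unfolding nbrs_def using pair_in_vpairs by auto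

lemma nbrs_eq_empty_if_not_vertex: "E \<subseteq> vpairs n \<Longrightarrow> \<not> x < n \<Longrightarrow> nbrs E x = {}"
  unfolding nbrs_def using pair_in_vpairs by auto

lemma map_pmf_deg_gnp:
  assumes v: "v < n" and p: "p \<in> {0..1}"
  shows "map_pmf (\<lambda>E. deg E v) (gnp n p) = binomial_pmf (n - 1) p"
proof -
  define A where "A = (\<lambda>u. {u, v}) ` ({0..<n} - {v})"
  have inj: "inj_on (\<lambda>u. {u, v}) ({0..<n} - {v})"
    by (auto simp: inj_on_def doubleton_eq_iff)
  have A_sub: "A \<subseteq> vpairs n" unfolding A_def using v pair_in_vpairs by auto
  have card_A: "card A = n - 1" unfolding A_def using inj v by (simp add: card_image)
  have deg_eq: "deg {e \<in> vpairs n. f e} v = card {e \<in> A. f e}" for f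
  proof -
    have "nbrs {e \<in> vpairs n. f e} v = {u \<in> {0..<n} - {v}. f {u, v}}"
      unfolding nbrs_def using v pair_in_vpairs by auto
    moreover have "(\<lambda>u. {u, v}) ` {u \<in> {0..<n} - {v}. f {u, v}} = {e \<in> A. f e}"
      unfolding A_def by auto
    ultimately show ?thesis
      unfolding deg_def using inj by (metis (no_types, lifting) card_image inj_on_subset mem_Collect_eq subsetI)
  qed
  have "map_pmf (\<lambda>E. deg E v) (gnp n p) =
      map_pmf (\<lambda>f. card {e \<in> A. f e}) (Pi_pmf (vpairs n) False (\<lambda>_. bernoulli_pmf p))"
    unfolding gnp_def map_pmf_comp by (simp add: deg_eq)
  also have "\<dots> = map_pmf (\<lambda>f. card {e \<in> A. f e})
      (map_pmf (\<lambda>f x. if x \<in> A then f x else False) (Pi_pmf (vpairs n) False (\<lambda>_. bernoulli_pmf p)))"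
    unfolding map_pmf_comp by (intro arg_cong2[where f=map_pmf] ext arg_cong[where f=card]) auto
  also have "\<dots> = map_pmf (\<lambda>f. card {e \<in> A. f e}) (Pi_pmf A False (\<lambda>_. bernoulli_pmf p))"
    by (subst Pi_pmf_subset[OF finite_vpairs A_sub]) (rule refl)
  also have "\<dots> = binomial_pmf (n - 1) p"
    using binomial_pmf_altdef'[of A "n - 1" p] A_def card_A p by simp
  finally show ?thesis .
qed

lemma prob_gnp_deg:
  assumes "v < n" and "p \<in> {0..1}"
  shows "measure_pmf.prob (gnp n p) {E. P (deg E v)} = measure_pmf.prob (binomial_pmf (n - 1) p) {k. P k}"
  using arg_cong[OF map_pmf_deg_gnp[OF assms], of "\<lambda>M. measure_pmf.prob M {k. P k}"]
  by (simp add: vimage_def)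

lemma prob_gnp_max_deg_gt:
  assumes "p \<in> {0..1}"
  shows "measure_pmf.prob (gnp n p) {E. \<exists>v<n. deg E v > D}
    \<le> real n * measure_pmf.prob (binomial_pmf (n - 1) p) {k. k > D}"
proof -
  have "{E. \<exists>v<n. deg E v > D} = (\<Union>v\<in>{0..<n}. {E. deg E v > D})" by auto
  then have "measure_pmf.prob (gnp n p) {E. \<exists>v<n. deg E v > D}
      \<le> (\<Sum>v\<in>{0..<n}. measure_pmf.prob (gnp n p) {E. deg E v > D})"
    using measure_pmf.finite_measure_subadditive_finite[of "{0..<n}" "\<lambda>v. {E. deg E v > D}" "gnp n p"]
    by simp
  also have "\<dots> = real n * measure_pmf.prob (binomial_pmf (n - 1) p) {k. k > D}"
    using prob_gnp_deg[OF _ assms, where P="\<lambda>k. k > D"] by simp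
  finally show ?thesis .
qed

lemma expectation_card_S0_gnp:
  assumes "p \<in> {0..1}"
  shows "measure_pmf.expectation (gnp n p) (\<lambda>E. real (card (S0 E n p)))
    = real n * measure_pmf.prob (binomial_pmf (n - 1) p) {k. real k \<le> real n * p / 10}"
proof -
  have "real (card (S0 E n p)) = (\<Sum>v\<in>{0..<n}. indicator {E. real (deg E v) \<le> real n * p / 10} E)" for E
    unfolding S0_def by (simp add: indicator_def sum.If_cases Int_def conj_commute)
  then have "measure_pmf.expectation (gnp n p) (\<lambda>E. real (card (S0 E n p))) =
      (\<Sum>v\<in>{0..<n}. measure_pmf.prob (gnp n p) {E. real (deg E v) \<le> real n * p / 10})"
    by (simp add: Bochner_Integration.integral_sum integrable_measure_pmf_finite[OF finite_set_pmf_gnp])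
  also have "\<dots> = real n * measure_pmf.prob (binomial_pmf (n - 1) p) {k. real k \<le> real n * p / 10}"
    using prob_gnp_deg[OF _ assms, where P="\<lambda>k. real k \<le> real n * p / 10"] by simp
  finally show ?thesis .
qed

lemma card_near_S0_le:
  assumes E: "E \<subseteq> vpairs n" and n: "n > 0"
  shows "real (card {v\<in>{0..<n}. S0 E n p \<inter> ball E v k \<noteq> {}}) / real n \<le>
    indicator {E. \<exists>v<n. deg E v > D} E + real (card (S0 E n p)) * real (D + 1) ^ k / real n"
proof (cases "\<exists>v<n. deg E v > D")
  case True
  have "card {v\<in>{0..<n}. S0 E n p \<inter> ball E v k \<noteq> {}} \<le> card {0..<n}"
    by (intro card_mono) auto
  then have "real (card {v\<in>{0..<n}. S0 E n p \<inter> ball E v k \<noteq> {}}) / real n \<le> 1"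
    using n by simp
  moreover have "0 \<le> real (card (S0 E n p)) * real (D + 1) ^ k / real n" by simp
  moreover have "indicator {E. \<exists>v<n. deg E v > D} E = (1::real)" using True by simp
  ultimately show ?thesis by linarith
next
  case False
  have "finite (nbrs E x)" for x
    using nbrs_subset_vertices[OF E] finite_subset by blast
  moreover have "card (nbrs E x) \<le> D" for x
    using False nbrs_eq_empty_if_not_vertex[OF E, of x] unfolding deg_def by (cases "x < n") auto
  moreover have "finite (S0 E n p)" unfolding S0_def by simp
  ultimately have "card {v\<in>{0..<n}. S0 E n p \<inter> ball E v k \<noteq> {}} \<le> card (S0 E n p) * (D + 1) ^ k"
    by (rule card_near_set_le)
  then have "real (card {v\<in>{0..<n}. S0 E n p \<inter> ball E v k \<noteq> {}}) \<le> real (card (S0 E n p)) * real (D + 1) ^ k"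
    by (simp only: of_nat_le_iff flip: of_nat_mult of_nat_power)
  then show ?thesis using False n by (simp add: divide_right_mono)
qed

lemma expectation_near_S0_le:
  assumes n: "n > 0" and p: "p \<in> {0..1}"
  shows "measure_pmf.expectation (gnp n p)
      (\<lambda>E. real (card {v\<in>{0..<n}. S0 E n p \<inter> ball E v k \<noteq> {}}) / real n) \<le>
    real n * measure_pmf.prob (binomial_pmf (n - 1) p) {j. j > D} +
    real (D + 1) ^ k * measure_pmf.prob (binomial_pmf (n - 1) p) {j. real j \<le> real n * p / 10}"
proof -
  let ?G = "gnp n p"
  have int: "integrable (measure_pmf ?G) f" for f :: "nat set set \<Rightarrow> real"
    by (rule integrable_measure_pmf_finite[OF finite_set_pmf_gnp])
  let ?c = "real (D + 1) ^ k / real n"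
  have "measure_pmf.expectation ?G
      (\<lambda>E. real (card {v\<in>{0..<n}. S0 E n p \<inter> ball E v k \<noteq> {}}) / real n) \<le>
    measure_pmf.expectation ?G (\<lambda>E. indicator {E. \<exists>v<n. deg E v > D} E + ?c * real (card (S0 E n p)))"
    using card_near_S0_le[OF _ n, of _ p k D] set_pmf_gnp_subset
    by (intro integral_mono_AE int AE_pmfI) (auto simp: algebra_simps)
  also have "\<dots> = measure_pmf.prob ?G {E. \<exists>v<n. deg E v > D} +
      ?c * measure_pmf.expectation ?G (\<lambda>E. real (card (S0 E n p)))"
    by (subst Bochner_Integration.integral_add) (auto simp: int)
  also have "\<dots> \<le> real n * measure_pmf.prob (binomial_pmf (n - 1) p) {j. j > D} +
      ?c * (real n * measure_pmf.prob (binomial_pmf (n - 1) p) {j. real j \<le> real n * p / 10})"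
    using prob_gnp_max_deg_gt[OF p, of n D] expectation_card_S0_gnp[OF p, of n] by simp
  finally show ?thesis using n by (simp add: field_simps)
qed

lemma prob_binomial_le_weighted_sum:
  assumes q: "q \<in> {0..1}" and g: "\<And>k. k \<in> A \<Longrightarrow> 1 \<le> g k" "\<And>k. 0 \<le> g k"
  shows "measure_pmf.prob (binomial_pmf N q) A \<le> (\<Sum>k\<le>N. pmf (binomial_pmf N q) k * g k)"
proof -
  have "set_pmf (binomial_pmf N q) \<subseteq> {..N}"
    using q by (auto simp: set_pmf_binomial_eq)
  then have "measure_pmf.prob (binomial_pmf N q) A = measure_pmf.prob (binomial_pmf N q) (A \<inter> {..N})"
    by (intro measure_eq_AE AE_pmfI) auto
  also have "\<dots> = (\<Sum>k\<in>A \<inter> {..N}. pmf (binomial_pmf N q) k)"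
    by (rule measure_measure_pmf_finite) simp
  also have "\<dots> \<le> (\<Sum>k\<in>A \<inter> {..N}. pmf (binomial_pmf N q) k * g k)"
    using g by (intro sum_mono) (simp add: mult_le_cancel_left1 pmf_nonneg)
  also have "\<dots> \<le> (\<Sum>k\<le>N. pmf (binomial_pmf N q) k * g k)"
    using g by (intro sum_mono2) auto
  finally show ?thesis .
qed

lemma binomial_generating_function_le:
  assumes q: "q \<in> {0..1}" and z: "z \<ge> 0"
  shows "(\<Sum>k\<le>N. pmf (binomial_pmf N q) k * z ^ k) \<le> exp (N * q * (z - 1))"
proof -
  have "(\<Sum>k\<le>N. pmf (binomial_pmf N q) k * z ^ k) = (\<Sum>k\<le>N. of_nat (N choose k) * (q * z) ^ k * (1 - q) ^ (N - k))"
    using q by (intro sum.cong refl) (simp add: power_mult_distrib)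
  also have "\<dots> = (q * z + (1 - q)) ^ N" by (rule binomial_ring[symmetric])
  also have "\<dots> \<le> exp (q * (z - 1)) ^ N"
  proof (rule power_mono)
    show "q * z + (1 - q) \<le> exp (q * (z - 1))"
      using exp_ge_add_one_self[of "q * (z - 1)"] by (simp add: algebra_simps)
    show "0 \<le> q * z + (1 - q)" using q z by simp
  qed
  also have "\<dots> = exp (N * q * (z - 1))" by (simp add: exp_of_nat_mult[symmetric] mult.assoc)
  finally show ?thesis .
qed

lemma binomial_lower_tail:
  assumes q: "q \<in> {0..1}"
  shows "measure_pmf.prob (binomial_pmf N q) {k. real k \<le> a} \<le> exp (a - N * q * (1 - exp (-1)))"
proof -
  have "measure_pmf.prob (binomial_pmf N q) {k. real k \<le> a} \<le>
      (\<Sum>k\<le>N. pmf (binomial_pmf N q) k * (exp a * exp (-1) ^ k))"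
  proof (rule prob_binomial_le_weighted_sum[OF q])
    fix k assume "k \<in> {k. real k \<le> a}"
    moreover have "exp a * exp (-1) ^ k = exp (a - k)"
      by (simp add: exp_of_nat_mult[symmetric] exp_diff exp_minus field_simps)
    ultimately show "1 \<le> exp a * exp (-1) ^ k" by simp
  qed simp
  also have "\<dots> = exp a * (\<Sum>k\<le>N. pmf (binomial_pmf N q) k * exp (-1) ^ k)"
    by (simp add: sum_distrib_left algebra_simps)
  also have "\<dots> \<le> exp a * exp (N * q * (exp (-1) - 1))"
    using binomial_generating_function_le[OF q, of "exp (-1)" N] by (intro mult_left_mono) auto
  also have "\<dots> = exp (a - N * q * (1 - exp (-1)))" by (simp add: exp_add[symmetric] algebra_simps)
  finally show ?thesis .
qed

lemma binomial_upper_tail: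
  assumes q: "q \<in> {0..1}"
  shows "measure_pmf.prob (binomial_pmf N q) {k. real k > a} \<le> exp (N * q * (exp 1 - 1) - a)"
proof -
  have "measure_pmf.prob (binomial_pmf N q) {k. real k > a} \<le>
      (\<Sum>k\<le>N. pmf (binomial_pmf N q) k * (exp (-a) * exp 1 ^ k))"
  proof (rule prob_binomial_le_weighted_sum[OF q])
    fix k assume "k \<in> {k. real k > a}"
    moreover have "exp (-a) * exp 1 ^ k = exp (k - a)"
      by (simp add: exp_of_nat_mult[symmetric] exp_diff exp_minus field_simps)
    ultimately show "1 \<le> exp (-a) * exp 1 ^ k" by simp
  qed simp
  also have "\<dots> = exp (-a) * (\<Sum>k\<le>N. pmf (binomial_pmf N q) k * exp 1 ^ k)"
    by (simp add: sum_distrib_left algebra_simps)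
  also have "\<dots> \<le> exp (-a) * exp (N * q * (exp 1 - 1))"
    using binomial_generating_function_le[OF q, of "exp 1" N] by (intro mult_left_mono) auto
  also have "\<dots> = exp (N * q * (exp 1 - 1) - a)" by (simp add: exp_add[symmetric] algebra_simps)
  finally show ?thesis .
qed

lemma max_deg_tail_le:
  assumes n: "n > 0" and p: "p \<in> {0..1}" and D: "2 * real n * p + 2 * ln (real n) \<le> real D"
  shows "real n * measure_pmf.prob (binomial_pmf (n - 1) p) {j. j > D} \<le> 1 / real n"
proof -
  have "real (n - 1) * p * (exp 1 - 1) \<le> real n * p * 2"
    using p exp_le mult_mono[of "real (n - 1) * p" "real n * p" "exp 1 - 1" 2]
    by (simp add: mult_right_mono)
  then have "real (n - 1) * p * (exp 1 - 1) - real D \<le> - 2 * ln (real n)"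
    using D by linarith
  moreover have "{j. j > D} = {j. real j > real D}" by simp
  ultimately have "measure_pmf.prob (binomial_pmf (n - 1) p) {j. j > D} \<le> exp (- 2 * ln (real n))"
    using binomial_upper_tail[OF p, of "n - 1" "real D"] by (metis exp_le_cancel_iff order.trans)
  also have "exp (- 2 * ln (real n)) = 1 / (real n * real n)"
    using n by (simp add: exp_minus exp_of_nat_mult[of 2, simplified] power2_eq_square divide_inverse)
  finally show ?thesis
    using n by (simp add: field_simps)
qed

lemma low_deg_tail_le:
  assumes n: "n > 0" and p: "p \<in> {0..1}" and lo: "ln (real n) \<le> real n * p"
  shows "measure_pmf.prob (binomial_pmf (n - 1) p) {j. real j \<le> real n * p / 10}
    \<le> exp (- 2/5 * ln (real n) + 1/2)"
proof -
  have "exp (-1::real) \<le> 1/2"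
    using exp_ge_add_one_self[of 1] by (simp add: exp_minus field_simps)
  then have "real (n - 1) * p * (1/2) \<le> real (n - 1) * p * (1 - exp (-1))"
    using p by (intro mult_left_mono) auto
  moreover have "real (n - 1) = real n - 1" using n by simp
  ultimately have "real n * p / 10 - real (n - 1) * p * (1 - exp (-1)) \<le> - 2/5 * ln (real n) + 1/2"
    using p lo by (simp add: algebra_simps)
  then show ?thesis
    using binomial_lower_tail[OF p, of "n - 1" "real n * p / 10"] by (meson exp_le_cancel_iff order.trans)
qed

lemma omega0_bounds:
  assumes np: "3 \<le> real n * p" and lll: "1 \<le> ln (ln (ln (real n)))"
  shows "0 \<le> omega0 n p" and "omega0 n p \<le> real n * p / 100"
proof -
  have eps: "0 < eps n" "eps n \<le> 1"
    using lll unfolding eps_def by auto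
  have ln_np: "1 \<le> ln (real n * p)"
    using np exp_le by (subst ln_ge_iff) auto
  have omega0_eq: "omega0 n p = (eps n)^2 * (real n * p) / (100 * ln (real n * p))"
    unfolding omega0_def by (simp add: mult.assoc)
  then show "0 \<le> omega0 n p" using ln_np np by simp
  have "(eps n)^2 * (real n * p) / (100 * ln (real n * p)) \<le> 1 * (real n * p) / (100 * 1)"
    using eps ln_np np by (intro frac_le mult_right_mono) (auto simp: power_le_one)
  with omega0_eq show "omega0 n p \<le> real n * p / 100" by simp
qed

lemma power_le_exp_mult_ln:
  fixes a b x :: real
  assumes "1 \<le> a" and "a \<le> b" and "real k \<le> x"
  shows "a ^ k \<le> exp (x * ln b)"
proof -
  have "a ^ k = exp (real k * ln a)"
    using assms(1) by (simp add: exp_of_nat_mult)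
  also have "\<dots> \<le> exp (x * ln b)"
    using assms by (intro exp_mono mult_mono) auto
  finally show ?thesis .
qed

definition error_bound :: "real \<Rightarrow> nat \<Rightarrow> real" where
  "error_bound C n = 1 / real n + exp (((C * ln (real n)) powr (3/4) + 1) * ln ((2 * C + 4) * ln (real n))
     - 2/5 * ln (real n) + 1/2)"

lemma prob_no_increase_ge_error_bound:
  fixes n :: nat and p C s :: real
  assumes L3: "3 \<le> ln (real n)" and lll: "1 \<le> ln (ln (ln (real n)))"
    and lo: "ln (real n) \<le> real n * p" and hi: "real n * p \<le> C * ln (real n)" and p1: "p \<le> 1"
  shows "measure_pmf.prob (db_experiment n p s (nat \<lfloor>(omega0 n p) powr (3/4)\<rfloor>))
            {r. no_increase n p (nat \<lfloor>(omega0 n p) powr (3/4)\<rfloor>) r}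
         \<ge> 1 - error_bound C n"
proof -
  define L where "L = ln (real n)"
  define m where "m = nat \<lfloor>(omega0 n p) powr (3/4)\<rfloor>"
  define D where "D = nat \<lceil>2 * real n * p + 2 * L\<rceil>"
  have n: "n > 0" using L3 by (cases n) auto
  have np: "3 \<le> real n * p" using lo L3 by linarith
  have "0 < real n * p" using np by linarith
  then have p: "p \<in> {0..1}" using n p1 by (simp add: zero_less_mult_iff)
  have L1: "1 \<le> L" using L3 unfolding L_def by simp
  let ?low = "measure_pmf.prob (binomial_pmf (n - 1) p) {j. real j \<le> real n * p / 10}"
  have reduction: "measure_pmf.prob (db_experiment n p s m) {r. no_increase n p m r} \<ge>
      1 - (real n * measure_pmf.prob (binomial_pmf (n - 1) p) {j. j > D} + real (D + 1) ^ Suc m * ?low)"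
    using prob_no_increase_ge[OF n, where p=p and s=s and m=m] expectation_near_S0_le[OF n p, of "Suc m" D] by linarith
  have max_deg: "real n * measure_pmf.prob (binomial_pmf (n - 1) p) {j. j > D} \<le> 1 / real n"
    using max_deg_tail_le[OF n p] real_nat_ceiling_ge unfolding D_def L_def by blast
  have "real m \<le> omega0 n p powr (3/4)" unfolding m_def by simp
  also have "\<dots> \<le> (C * L) powr (3/4)"
    using omega0_bounds[OF np lll] hi unfolding L_def by (intro powr_mono2) auto
  finally have "real (Suc m) \<le> (C * L) powr (3/4) + 1" by simp
  moreover have "real (D + 1) \<le> (2 * C + 4) * L"
  proof -
    have "real D \<le> 2 * real n * p + 2 * L + 1"
      using np L1 unfolding D_def by linarith
    then show ?thesis using hi L1 unfolding L_def by (simp add: algebra_simps)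
  qed
  ultimately have "real (D + 1) ^ Suc m \<le> exp (((C * L) powr (3/4) + 1) * ln ((2 * C + 4) * L))"
    by (intro power_le_exp_mult_ln) auto
  then have "real (D + 1) ^ Suc m * ?low
      \<le> exp (((C * L) powr (3/4) + 1) * ln ((2 * C + 4) * L)) * exp (- 2/5 * L + 1/2)"
    using low_deg_tail_le[OF n p lo] unfolding L_def by (intro mult_mono) auto
  also have "\<dots> = exp (((C * L) powr (3/4) + 1) * ln ((2 * C + 4) * L) - 2/5 * L + 1/2)"
    by (simp add: exp_add[symmetric])
  finally show ?thesis using reduction max_deg unfolding m_def L_def error_bound_def by linarith
qed

theorem mainTheorem14:
  fixes s :: real and \<omega> :: "nat \<Rightarrow> real" and p :: "nat \<Rightarrow> real"
  assumes "s > 1"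
    and "filterlim \<omega> at_top sequentially"
    and "\<And>n. p n = (ln (real n) + \<omega> n) / real n"
    and "(\<lambda>n. real n * p n) \<in> O(\<lambda>n. ln (real n))"
  shows "(\<lambda>n. measure_pmf.prob
            (db_experiment n (p n) s (nat \<lfloor>(omega0 n (p n)) powr (3/4)\<rfloor>))
            {r. no_increase n (p n) (nat \<lfloor>(omega0 n (p n)) powr (3/4)\<rfloor>) r})
         \<longlonglongrightarrow> 1"
proof -
  from assms(4) obtain C where C: "C > 0"
    and bigO: "eventually (\<lambda>n. norm (real n * p n) \<le> C * norm (ln (real n))) at_top"
    by (elim landau_o.bigE)
  have "eventually (\<lambda>n. \<omega> n \<ge> 0) at_top"
    using assms(2) by (simp add: filterlim_at_top)
  moreover have "eventually (\<lambda>n::nat. 3 \<le> ln (real n) \<and> 1 \<le> ln (ln (ln (real n)))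
      \<and> C * ln (real n) \<le> real n) at_top"
    by (intro eventually_conj) real_asymp+
  ultimately have lower: "eventually (\<lambda>n. 1 - error_bound C n \<le>
      measure_pmf.prob (db_experiment n (p n) s (nat \<lfloor>(omega0 n (p n)) powr (3/4)\<rfloor>))
            {r. no_increase n (p n) (nat \<lfloor>(omega0 n (p n)) powr (3/4)\<rfloor>) r}) at_top"
    using bigO
  proof eventually_elim
    case (elim n)
    then have n: "real n > 0" by (cases n) auto
    have np: "real n * p n = ln (real n) + \<omega> n" using n assms(3)[of n] by simp
    have hi: "real n * p n \<le> C * ln (real n)" using elim by simp
    have "real n * p n \<le> real n" using hi elim by linarith
    then have "p n \<le> 1" using n by simp
    then show ?case
      using prob_no_increase_ge_error_bound[of n "p n" C s] elim np hi by simp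
  qed
  have "(\<lambda>n. 1 - error_bound C n) \<longlonglongrightarrow> 1"
    unfolding error_bound_def using C by real_asymp
  from tendsto_sandwich[OF lower _ this tendsto_const] show ?thesis by simp
qed

end
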